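(* Let $\diamond$ be the operation on $\mathcal A$-valued moulds defined in the context. Then: (i) $\diamond$ is associative; (ii) if $N$ is symmetrel, then $M\diamond N=M\circ N$ for every mould $M$; (iii) if $M$ and $N$ are both symmetrel, then $M\circ N$ is symmetrel.
   Context: Let $\bm k$ be a field, $\Omega$ a set with a commutative semigroup law written additively ($[a+b]$ the sum in $\Omega$), $\Omega^*$ the free monoid of words on $\Omega$ with empty word $\mathbf 1$, $\|\bm\omega\|=[\omega_1+\cdots+\omega_n]\in\Omega$ the weight of a nonempty word $\bm\omega=\omega_1\cdots\omega_n$, and $\mathcal H^\Omega$ the $\bm k$-vector space with basis $\Omega^*$. The quasi-shuffle product $\star$ on $\mathcal H^\Omega$ is defined bilinearly by $\mathbf 1\star\bm\omega=\bm\omega\star\mathbf 1=\bm\omega$ and $a\bm u\star b\bm v=a(\bm u\star b\bm v)+b(a\bm u\star\bm v)+[a+b](\bm u\star\bm v)$ for letters $a,b$ and words $\bm u,\bm v$. Let $\mathcal A$ be a commutative unital $\bm k$-algebra; a mould is a linear map $M:\mathcal H^\Omega\to\mathcal A$, $M^{\bm\omega}:=M(\bm\omega)$. A mould $N$ is symmetrel if $N^{\mathbf 1}=1$ and $N^{\bm\omega'\star\bm\omega''}=N^{\bm\omega'}N^{\bm\omega''}$ for all words $\bm\omega',\bm\omega''$. Mould composition: $(M\circ N)^{\mathbf 1}=M^{\mathbf 1}$ and for $\bm\omega\neq\mathbf 1$, $(M\circ N)^{\bm\omega}=\sum_{s\ge1}\sum_{\bm\omega=\bm\omega^1\cdots\bm\omega^s}M^{\|\bm\omega^1\|\cdots\|\bm\omega^s\|}N^{\bm\omega^1}\cdots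 N^{\bm\omega^s}$, the inner sum over all ways of writing $\bm\omega$ as a concatenation of $s$ nonempty words, $\|\bm\omega^1\|\cdots\|\bm\omega^s\|$ being the word formed by their weights. The diamond composition is $(M\diamond N)^{\mathbf 1}=M^{\mathbf 1}N^{\mathbf 1}$ and for $\bm\omega\neq\mathbf 1$, $(M\diamond N)^{\bm\omega}=\sum_{s\ge1}\sum_{\bm\omega=\bm\omega^1\cdots\bm\omega^s}M^{\|\bm\omega^1\|\cdots\|\bm\omega^s\|}N^{\bm\omega^1\star\cdots\star\bm\omega^s}$ (same index set). *)

theory Defs
  imports Main "HOL-Library.Multiset"
begin

text \<open>The space H^Omega has basis the words; a quasi-shuffle product of two words is a
  linear combination of words with natural-number coefficients, represented as a
  multiset of words. A mould (linear map H^Omega to A) is determined by its values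
  on words, so it is represented as a function from words to A.\<close>

fun qsh :: "'w::ab_semigroup_add list \<Rightarrow> 'w list \<Rightarrow> 'w list multiset" where
  "qsh [] v = {#v#}"
| "qsh u [] = {#u#}"
| "qsh (a # u) (b # v) =
     image_mset ((#) a) (qsh u (b # v)) + image_mset ((#) b) (qsh (a # u) v)
   + image_mset ((#) (a + b)) (qsh u v)"

definition ev :: "('w list \<Rightarrow> 'a::comm_ring_1) \<Rightarrow> 'w list multiset \<Rightarrow> 'a" where
  "ev M X = sum_mset (image_mset M X)"

fun qshs :: "'w::ab_semigroup_add list list \<Rightarrow> 'w list multiset" where
  "qshs [] = {#[]#}"
| "qshs (w # ws) = sum_mset (image_mset (qsh w) (qshs ws))"

definition weight :: "'w::ab_semigroup_add list \<Rightarrow> 'w" where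
  "weight w = foldl (+) (hd w) (tl w)"

definition splits :: "'w list \<Rightarrow> 'w list list set" where
  "splits w = {ws. concat ws = w \<and> [] \<notin> set ws}"

definition symmetrel :: "('w::ab_semigroup_add list \<Rightarrow> 'a::comm_ring_1) \<Rightarrow> bool" where
  "symmetrel N \<longleftrightarrow> N [] = 1 \<and> (\<forall>u v. ev N (qsh u v) = N u * N v)"

definition mcomp :: "('w::ab_semigroup_add list \<Rightarrow> 'a::comm_ring_1) \<Rightarrow> ('w list \<Rightarrow> 'a) \<Rightarrow> 'w list \<Rightarrow> 'a" where
  "mcomp M N w = (if w = [] then M []
     else (\<Sum>ws\<in>splits w. M (map weight ws) * prod_list (map N ws)))"

definition diamond :: "('w::ab_semigroup_add list \<Rightarrow> 'a::comm_ring_1) \<Rightarrow> ('w list \<Rightarrow> 'a) \<Rightarrow> 'w list \<Rightarrow> 'a" where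
  "diamond M N w = (if w = [] then M [] * N []
     else (\<Sum>ws\<in>splits w. M (map weight ws) * ev N (qshs ws)))"

end

theory Submission
  imports Defs
begin

text \<open>The diamond composition is dual to the map \<open>\<Delta>\<close> sending a word \<open>w\<close> to the formal sum
  of the pairs \<open>(\<parallel>w\<^sup>1\<parallel>\<cdots>\<parallel>w\<^sup>s\<parallel>, w\<^sup>1 \<star> \<cdots> \<star> w\<^sup>s)\<close> over all factorisations
  \<open>w = w\<^sup>1\<cdots>w\<^sup>s\<close>: \<open>(M \<diamond> N)(w) = \<langle>M \<otimes> N, \<Delta> w\<rangle>\<close>. When \<open>N\<close> is symmetrel the second components
  evaluate to the products \<open>N(w\<^sup>1)\<cdots>N(w\<^sup>s)\<close>, which gives (ii).
  Deconcatenation is compatible with the quasi-shuffle, and from this one shows that \<open>\<Delta>\<close> is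
  multiplicative, \<open>\<Delta>(u \<star> v) = \<Delta> u \<star> \<Delta> v\<close> with the componentwise product on pairs; pairing
  with \<open>M \<otimes> N\<close> for symmetrel \<open>M\<close>, \<open>N\<close> then gives (iii) via (ii).
  Associativity (i) amounts to \<open>(\<Delta> \<otimes> id) \<Delta> = (id \<otimes> \<Delta>) \<Delta>\<close>: both sides obey the same
  recursion on the first block of \<open>w\<close>, by multiplicativity of \<open>\<Delta>\<close> and coassociativity of
  deconcatenation.

  Formal sums with coefficients in \<open>\<nat>\<close> are multisets, \<open>bind_mset\<close> is linear extension, and
  \<open>\<Delta>\<close> is \<open>diamond_dual\<close>.\<close>

subsection \<open>Multisets as formal sums\<close>

definition bind_mset :: "'a multiset \<Rightarrow> ('a \<Rightarrow> 'b multiset) \<Rightarrow> 'b multiset" where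
  "bind_mset X f = (\<Sum>x\<in>#X. f x)"

lemma bind_mset_empty [simp]: "bind_mset {#} f = {#}"
  by (simp add: bind_mset_def)

lemma bind_mset_add_mset [simp]: "bind_mset (add_mset x X) f = f x + bind_mset X f"
  by (simp add: bind_mset_def)

lemma bind_mset_union [simp]: "bind_mset (X + Y) f = bind_mset X f + bind_mset Y f"
  by (simp add: bind_mset_def)

lemma bind_mset_plus [simp]: "bind_mset X (\<lambda>x. f x + g x) = bind_mset X f + bind_mset X g"
  by (induction X) (auto simp: add_ac)

lemma bind_mset_zero [simp]: "bind_mset X (\<lambda>x. {#}) = {#}"
  by (induction X) auto

lemma bind_mset_assoc [simp]: "bind_mset (bind_mset X f) g = bind_mset X (\<lambda>x. bind_mset (f x) g)"
  by (induction X) auto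

lemma bind_mset_image_mset [simp]: "bind_mset (image_mset h X) f = bind_mset X (\<lambda>x. f (h x))"
  by (induction X) auto

lemma image_mset_bind_mset [simp]:
  "image_mset h (bind_mset X f) = bind_mset X (\<lambda>x. image_mset h (f x))"
  by (induction X) auto

lemma bind_mset_return [simp]: "bind_mset X (\<lambda>x. {#f x#}) = image_mset f X"
  by (induction X) auto

lemma bind_mset_return_pair [simp]: "bind_mset X (\<lambda>(a, b). {#(a, b)#}) = X"
  by (induction X) auto

lemma bind_mset_add_mset_fun [simp]:
  "bind_mset X (\<lambda>x. add_mset (f x) (g x)) = image_mset f X + bind_mset X g"
  by (induction X) auto

lemma bind_mset_sum [simp]: "bind_mset (\<Sum>i\<in>I. F i) f = (\<Sum>i\<in>I. bind_mset (F i) f)"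
  by (induction I rule: infinite_finite_induct) auto

lemma bind_mset_swap: "bind_mset X (\<lambda>x. bind_mset Y (f x)) = bind_mset Y (\<lambda>y. bind_mset X (\<lambda>x. f x y))"
  unfolding bind_mset_def by (rule sum_mset.swap)

lemma bind_mset_image_mset_swap:
  "bind_mset X (\<lambda>x. image_mset (f x) Y) = bind_mset Y (\<lambda>y. image_mset (\<lambda>x. f x y) X)"
  using bind_mset_swap[of X Y "\<lambda>x y. {#f x y#}"] by simp

lemma bind_mset_cong: "(\<And>x. x \<in># X \<Longrightarrow> f x = g x) \<Longrightarrow> bind_mset X f = bind_mset X g"
  by (induction X) auto

lemma bind_mset_cong_pair:
  "(\<And>a b. (a, b) \<in># X \<Longrightarrow> f a b = g a b) \<Longrightarrow>
    bind_mset X (\<lambda>(a, b). f a b) = bind_mset X (\<lambda>(a, b). g a b)"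
  by (rule bind_mset_cong) auto

lemma mem_bind_mset: "x \<in># bind_mset X f \<Longrightarrow> \<exists>y. y \<in># X \<and> x \<in># f y"
  by (induction X) auto

lemma sum_mset_bind_mset [simp]: "\<Sum>\<^sub># (bind_mset X f) = (\<Sum>x\<in>#X. \<Sum>\<^sub># (f x))"
  by (induction X) auto

lemma sum_mset_sum:
  "(\<Sum>x\<in>#(\<Sum>i\<in>I. X i). F x) = (\<Sum>i\<in>I. \<Sum>x\<in>#X i. F x)"
  by (induction I rule: infinite_finite_induct) auto

definition mset_times :: "'a multiset \<Rightarrow> 'b multiset \<Rightarrow> ('a \<times> 'b) multiset" where
  "mset_times X Y = bind_mset X (\<lambda>x. image_mset (Pair x) Y)"

lemma mset_times_single [simp]: "mset_times {#x#} {#y#} = {#(x, y)#}"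
  by (simp add: mset_times_def)

lemma mset_times_union_left [simp]: "mset_times (X + Y) Z = mset_times X Z + mset_times Y Z"
  by (simp add: mset_times_def)

lemma mset_times_bind_mset_left:
  "mset_times (bind_mset X f) Y = bind_mset X (\<lambda>x. mset_times (f x) Y)"
  by (simp add: mset_times_def)

lemma mset_times_bind_mset_right:
  "mset_times X (bind_mset Y f) = bind_mset Y (\<lambda>y. mset_times X (f y))"
  by (simp add: mset_times_def bind_mset_swap[of X])

lemma bind_mset_mset_times:
  "bind_mset (mset_times X Y) f = bind_mset X (\<lambda>x. bind_mset Y (\<lambda>y. f (x, y)))"
  by (simp add: mset_times_def)

lemma sum_mset_mset_times:
  fixes F :: "'a \<Rightarrow> 'c::semiring_0"
  shows "(\<Sum>(x, y)\<in>#mset_times X Y. F x * G y) = (\<Sum>x\<in>#X. F x) * (\<Sum>y\<in>#Y. G y)"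
  by (induction X)
     (simp_all add: mset_times_def algebra_simps sum_mset_distrib_left sum_mset.distrib
        multiset.map_comp comp_def)

subsection \<open>Weights and quasi-shuffles\<close>

lemma weight_singleton [simp]: "weight [a] = a"
  by (simp add: weight_def)

lemma foldl_plus_left: "foldl (+) (a + b) w = a + foldl (+) b (w :: 'w::ab_semigroup_add list)"
  by (induction w arbitrary: b) (auto simp: add.assoc)

lemma weight_Cons_Cons [simp]: "weight (a # b # w) = a + weight (b # w)"
  by (simp add: weight_def foldl_plus_left)

lemma weight_Cons: "w \<noteq> [] \<Longrightarrow> weight (a # w) = a + weight w"
  by (cases w) auto

lemma weight_append: "u \<noteq> [] \<Longrightarrow> v \<noteq> [] \<Longrightarrow> weight (u @ v) = weight u + weight v"
  by (induction u rule: induct_list012) (auto simp: weight_Cons add.assoc)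

lemma qsh_Nil_left: "qsh [] = (\<lambda>v. {#v#})"
  by auto

lemma qsh_Nil_right [simp]: "qsh u [] = {#u#}"
  by (cases u) auto

lemma qsh_commute: "qsh u v = qsh v u"
  by (induction u v rule: qsh.induct) (auto simp: add_ac)

lemma mem_qsh_neq_Nil: "x \<in># qsh u v \<Longrightarrow> u \<noteq> [] \<or> v \<noteq> [] \<Longrightarrow> x \<noteq> []"
  by (induction u v arbitrary: x rule: qsh.induct) auto

lemma weight_mem_qsh:
  "x \<in># qsh u v \<Longrightarrow> u \<noteq> [] \<Longrightarrow> v \<noteq> [] \<Longrightarrow> weight x = weight u + weight v"
proof (induction u v arbitrary: x rule: qsh.induct)
  case (3 a u b v)
  from "3.prems"(1) consider
      (left) y where "x = a # y" "y \<in># qsh u (b # v)"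
    | (right) y where "x = b # y" "y \<in># qsh (a # u) v"
    | (both) y where "x = (a + b) # y" "y \<in># qsh u v"
    by auto
  then show ?case
  proof cases
    case left
    then have "y \<noteq> []" by (auto dest: mem_qsh_neq_Nil)
    with left "3.IH"(1) show ?thesis
      by (cases "u = []") (simp_all add: weight_Cons add.assoc)
  next
    case right
    then have "y \<noteq> []" by (auto dest: mem_qsh_neq_Nil)
    with right "3.IH"(2) show ?thesis
      by (cases "v = []") (simp_all add: weight_Cons add_ac)
  next
    case both
    show ?thesis
    proof (cases "u = [] \<or> v = []")
      case True
      with both show ?thesis by (cases u; cases v) (auto simp: add_ac)
    next
      case False
      with both have "y \<noteq> []" by (auto dest: mem_qsh_neq_Nil)
      with both False "3.IH"(3) show ?thesis by (simp add: weight_Cons add_ac)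
    qed
  qed
qed auto

definition qsh_mset :: "'w::ab_semigroup_add list multiset \<Rightarrow> 'w list multiset \<Rightarrow> 'w list multiset" where
  "qsh_mset X Y = bind_mset X (\<lambda>x. bind_mset Y (qsh x))"

definition cons_mset :: "'w \<Rightarrow> 'w list multiset \<Rightarrow> 'w list multiset" where
  "cons_mset a X = image_mset ((#) a) X"

lemma qsh_mset_single [simp]: "qsh_mset {#x#} {#y#} = qsh x y"
  by (simp add: qsh_mset_def)

lemma qsh_mset_union_left [simp]: "qsh_mset (X + Y) Z = qsh_mset X Z + qsh_mset Y Z"
  by (simp add: qsh_mset_def)

lemma qsh_mset_union_right [simp]: "qsh_mset X (Y + Z) = qsh_mset X Y + qsh_mset X Z"
  by (simp add: qsh_mset_def)

lemma qsh_mset_Nil_left [simp]: "qsh_mset {#[]#} Y = Y"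
  by (simp add: qsh_mset_def qsh_Nil_left)

lemma qsh_mset_Nil_right [simp]: "qsh_mset X {#[]#} = X"
  by (simp add: qsh_mset_def)

lemma cons_mset_single [simp]: "cons_mset a {#u#} = {#a # u#}"
  by (simp add: cons_mset_def)

lemma cons_mset_union [simp]: "cons_mset a (X + Y) = cons_mset a X + cons_mset a Y"
  by (simp add: cons_mset_def)

lemma qsh_mset_commute: "qsh_mset X Y = qsh_mset Y X"
  unfolding qsh_mset_def by (subst bind_mset_swap) (simp add: qsh_commute)

lemma qsh_mset_cons_cons:
  "qsh_mset (cons_mset a X) (cons_mset b Y) =
     cons_mset a (qsh_mset X (cons_mset b Y)) + cons_mset b (qsh_mset (cons_mset a X) Y)
   + cons_mset (a + b) (qsh_mset X Y)"
  by (simp add: qsh_mset_def cons_mset_def)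

text \<open>The two triple products below expand into the same seven terms, matched up to one
  level of associativity; this is the induction step for associativity.\<close>

lemma qsh_mset_cons_cons_cons_left:
  "qsh_mset (qsh_mset (cons_mset a A) (cons_mset b B)) (cons_mset c C) =
     cons_mset a (qsh_mset (qsh_mset A (cons_mset b B)) (cons_mset c C))
   + cons_mset b (qsh_mset (qsh_mset (cons_mset a A) B) (cons_mset c C))
   + cons_mset c (qsh_mset (qsh_mset (cons_mset a A) (cons_mset b B)) C)
   + cons_mset (a + b) (qsh_mset (qsh_mset A B) (cons_mset c C))
   + cons_mset (a + c) (qsh_mset (qsh_mset A (cons_mset b B)) C)
   + cons_mset (b + c) (qsh_mset (qsh_mset (cons_mset a A) B) C)
   + cons_mset (a + b + c) (qsh_mset (qsh_mset A B) C)"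
  by (simp only: qsh_mset_cons_cons qsh_mset_union_left) (simp add: add_ac)

lemma qsh_mset_cons_cons_cons_right:
  "qsh_mset (cons_mset a A) (qsh_mset (cons_mset b B) (cons_mset c C)) =
     cons_mset a (qsh_mset A (qsh_mset (cons_mset b B) (cons_mset c C)))
   + cons_mset b (qsh_mset (cons_mset a A) (qsh_mset B (cons_mset c C)))
   + cons_mset c (qsh_mset (cons_mset a A) (qsh_mset (cons_mset b B) C))
   + cons_mset (a + b) (qsh_mset A (qsh_mset B (cons_mset c C)))
   + cons_mset (a + c) (qsh_mset A (qsh_mset (cons_mset b B) C))
   + cons_mset (b + c) (qsh_mset (cons_mset a A) (qsh_mset B C))
   + cons_mset (a + b + c) (qsh_mset A (qsh_mset B C))"
  by (simp only: qsh_mset_cons_cons qsh_mset_union_right) (simp add: add_ac)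

lemma qsh_assoc: "qsh_mset (qsh u v) {#w#} = qsh_mset {#u#} (qsh v w)"
proof (induction "length u + length v + length w" arbitrary: u v w rule: less_induct)
  case less
  show ?case
  proof (cases "u = [] \<or> v = [] \<or> w = []")
    case True
    then show ?thesis by (auto simp: qsh_Nil_left)
  next
    case False
    then obtain a u' b v' c w' where uvw: "u = a # u'" "v = b # v'" "w = c # w'"
      by (meson neq_Nil_conv)
    have "qsh_mset (qsh u v) {#w#} =
        qsh_mset (qsh_mset (cons_mset a {#u'#}) (cons_mset b {#v'#})) (cons_mset c {#w'#})"
      using uvw by (simp del: qsh.simps)
    also have "\<dots> = qsh_mset (cons_mset a {#u'#}) (qsh_mset (cons_mset b {#v'#}) (cons_mset c {#w'#}))"
      unfolding qsh_mset_cons_cons_cons_left qsh_mset_cons_cons_cons_right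
      using less uvw by (simp del: qsh.simps)
    also have "\<dots> = qsh_mset {#u#} (qsh v w)"
      using uvw by (simp del: qsh.simps)
    finally show ?thesis .
  qed
qed

lemma qsh_mset_assoc: "qsh_mset (qsh_mset X Y) Z = qsh_mset X (qsh_mset Y Z)"
proof -
  have "qsh_mset (qsh_mset X Y) Z =
      bind_mset X (\<lambda>x. bind_mset Y (\<lambda>y. bind_mset Z (\<lambda>z. qsh_mset (qsh x y) {#z#})))"
    by (simp add: qsh_mset_def bind_mset_swap[of "qsh _ _"])
  also have "\<dots> = bind_mset X (\<lambda>x. bind_mset Y (\<lambda>y. bind_mset Z (\<lambda>z. qsh_mset {#x#} (qsh y z))))"
    by (simp only: qsh_assoc)
  also have "\<dots> = qsh_mset X (qsh_mset Y Z)"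
    by (simp add: qsh_mset_def)
  finally show ?thesis .
qed

lemma qsh_mset_left_commute: "qsh_mset X (qsh_mset Y Z) = qsh_mset Y (qsh_mset X Z)"
  by (metis qsh_mset_assoc qsh_mset_commute)

lemmas qsh_mset_ac = qsh_mset_assoc qsh_mset_commute qsh_mset_left_commute

lemma bind_mset_qsh_assoc:
  "bind_mset (qsh u v) (\<lambda>x. bind_mset (qsh x w) f) = bind_mset (qsh v w) (\<lambda>y. bind_mset (qsh u y) f)"
proof -
  have "bind_mset (qsh u v) (\<lambda>x. bind_mset (qsh x w) f) = bind_mset (qsh_mset (qsh u v) {#w#}) f"
    by (simp add: qsh_mset_def)
  also have "\<dots> = bind_mset (qsh_mset {#u#} (qsh v w)) f"
    by (simp only: qsh_assoc)
  finally show ?thesis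
    by (simp add: qsh_mset_def)
qed

subsection \<open>Deconcatenation\<close>

fun deconcat :: "'w list \<Rightarrow> ('w list \<times> 'w list) multiset" where
  "deconcat [] = {#([], [])#}"
| "deconcat (a # z) = add_mset ([], a # z) (image_mset (apfst ((#) a)) (deconcat z))"

fun deconcat_ne :: "'w list \<Rightarrow> ('w list \<times> 'w list) multiset" where
  "deconcat_ne [] = {#}"
| "deconcat_ne (a # z) = image_mset (apfst ((#) a)) (deconcat z)"

lemma deconcat_eq: "deconcat z = add_mset ([], z) (deconcat_ne z)"
  by (cases z) auto

lemma mem_deconcat: "(p, r) \<in># deconcat z \<Longrightarrow> p @ r = z"
  by (induction z arbitrary: p r) auto

lemma mem_deconcat_ne: "(p, r) \<in># deconcat_ne z \<Longrightarrow> p \<noteq> [] \<and> p @ r = z"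
  by (cases z) (auto dest: mem_deconcat)

lemma length_mem_deconcat_ne: "(p, r) \<in># deconcat_ne z \<Longrightarrow> length r < length z"
  using mem_deconcat_ne[of p r z] by (cases p) auto

lemma bind_deconcat_ne_eq_sum:
  "bind_mset (deconcat_ne v) (\<lambda>(p, r). G p r) = (\<Sum>i\<in>{1..length v}. G (take i v) (drop i v))"
proof (induction v arbitrary: G)
  case (Cons a z)
  have "bind_mset (deconcat_ne (a # z)) (\<lambda>(p, r). G p r) =
      G [a] z + bind_mset (deconcat_ne z) (\<lambda>(p, r). G (a # p) r)"
    by (simp add: deconcat_eq split_def)
  also have "\<dots> = G [a] z + (\<Sum>i\<in>{1..length z}. G (a # take i z) (drop i z))"
    using Cons[of "\<lambda>p r. G (a # p) r"] by simp
  also have "\<dots> = (\<Sum>i\<in>{1..length (a # z)}. G (take i (a # z)) (drop i (a # z)))"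
  proof -
    have "{1..length (a # z)} = insert 1 (Suc ` {1..length z})"
      by (auto simp: image_iff)
    moreover have "(\<Sum>i\<in>Suc ` {1..length z}. G (take i (a # z)) (drop i (a # z))) =
        (\<Sum>i\<in>{1..length z}. G (a # take i z) (drop i z))"
      by (subst sum.reindex) auto
    ultimately show ?thesis
      by simp
  qed
  finally show ?case .
qed simp

text \<open>The bialgebra compatibility of deconcatenation with the quasi-shuffle.\<close>

lemma bind_qsh_deconcat:
  "bind_mset (qsh x y) deconcat =
     bind_mset (deconcat x) (\<lambda>(x1, x2). bind_mset (deconcat y) (\<lambda>(y1, y2).
       mset_times (qsh x1 y1) (qsh x2 y2)))"
proof (induction x y rule: qsh.induct)
  case (3 a u b v)
  show ?case
    using arg_cong[OF "3.IH"(1), of "image_mset (apfst ((#) a))"]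
      arg_cong[OF "3.IH"(2), of "image_mset (apfst ((#) b))"]
      arg_cong[OF "3.IH"(3), of "image_mset (apfst ((#) (a + b)))"]
    by (simp add: mset_times_def image_mset.compositionality o_def split_def add_ac)
qed (simp_all add: qsh_Nil_left)

lemma bind_qsh_deconcat_ne:
  "bind_mset (qsh x y) deconcat_ne =
     bind_mset (deconcat_ne x) (\<lambda>(x1, x2). bind_mset (deconcat y) (\<lambda>(y1, y2).
       mset_times (qsh x1 y1) (qsh x2 y2)))
   + bind_mset (deconcat_ne y) (\<lambda>(y1, y2). mset_times {#y1#} (qsh x y2))"
proof -
  have "bind_mset (qsh x y) deconcat = image_mset (Pair []) (qsh x y) + bind_mset (qsh x y) deconcat_ne"
    by (simp add: deconcat_eq[abs_def])
  moreover have "bind_mset (qsh x y) deconcat = image_mset (Pair []) (qsh x y)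
     + (bind_mset (deconcat_ne x) (\<lambda>(x1, x2). bind_mset (deconcat y) (\<lambda>(y1, y2).
          mset_times (qsh x1 y1) (qsh x2 y2)))
     + bind_mset (deconcat_ne y) (\<lambda>(y1, y2). mset_times {#y1#} (qsh x y2)))"
    unfolding bind_qsh_deconcat
    by (simp only: deconcat_eq[of x] deconcat_eq[of y] bind_mset_add_mset)
       (simp add: mset_times_def qsh_Nil_left)
  ultimately show ?thesis by simp
qed

lemma deconcat_coassoc:
  "bind_mset (deconcat v) (\<lambda>(p, r). bind_mset (deconcat r) (\<lambda>(g, r'). H p g r')) =
   bind_mset (deconcat v) (\<lambda>(g, r'). bind_mset (deconcat g) (\<lambda>(p, g'). H p g' r'))"
proof (induction v arbitrary: H)
  case (Cons a z)
  show ?case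
    using Cons[of "\<lambda>p. H (a # p)"] by (simp add: split_def add_ac)
qed simp

lemma deconcat_ne_coassoc:
  "bind_mset (deconcat_ne v) (\<lambda>(p, r). bind_mset (deconcat r) (\<lambda>(g, r'). H p g r')) =
   bind_mset (deconcat_ne v) (\<lambda>(g, r'). bind_mset (deconcat_ne g) (\<lambda>(p, g'). H p g' r'))"
  using deconcat_coassoc[of v H]
  by (simp add: deconcat_eq[of v] deconcat_eq[abs_def] split_def add_ac del: deconcat.simps)

lemma splits_Nil [simp]: "splits [] = {[]}"
  by (auto simp: splits_def) (metis list.set_intros(1) neq_Nil_conv)

lemma splits_eq_UN:
  assumes "v \<noteq> []"
  shows "splits v = (\<Union>i\<in>{1..length v}. (\<lambda>ws. take i v # ws) ` splits (drop i v))"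
proof (intro equalityI subsetI)
  fix ws assume ws: "ws \<in> splits v"
  then obtain p ws' where ws_eq: "ws = p # ws'"
    using assms unfolding splits_def by (cases ws) auto
  have "p \<noteq> []" "v = p @ concat ws'" "[] \<notin> set ws'"
    using ws ws_eq by (auto simp: splits_def)
  then show "ws \<in> (\<Union>i\<in>{1..length v}. (\<lambda>ws. take i v # ws) ` splits (drop i v))"
    using ws_eq by (auto simp: splits_def Suc_le_eq intro!: bexI[of _ "length p"])
next
  fix ws assume "ws \<in> (\<Union>i\<in>{1..length v}. (\<lambda>ws. take i v # ws) ` splits (drop i v))"
  then obtain i ws' where "i \<in> {1..length v}" "ws = take i v # ws'" "ws' \<in> splits (drop i v)"
    by auto
  with assms show "ws \<in> splits v"
    by (auto simp: splits_def)
qed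

lemma finite_splits: "finite (splits v)"
proof (induction "length v" arbitrary: v rule: less_induct)
  case less
  then show ?case
    by (cases "v = []") (auto simp: splits_eq_UN)
qed

subsection \<open>The dual of the diamond composition\<close>

definition diamond_dual :: "'w::ab_semigroup_add list \<Rightarrow> ('w list \<times> 'w list) multiset" where
  "diamond_dual v = (\<Sum>ws\<in>splits v. image_mset (Pair (map weight ws)) (qshs ws))"

definition prepend_block ::
    "'w::ab_semigroup_add \<Rightarrow> 'w list multiset \<Rightarrow> ('w list \<times> 'w list) multiset \<Rightarrow> ('w list \<times> 'w list) multiset"
  where "prepend_block c S Y = bind_mset Y (\<lambda>(W, Q). mset_times {#c # W#} (qsh_mset S {#Q#}))"

lemma prepend_block_single:
  "prepend_block c {#p#} Y = bind_mset Y (\<lambda>(W, Q). image_mset (Pair (c # W)) (qsh p Q))"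
  by (simp add: prepend_block_def mset_times_def)

lemma diamond_dual_Nil [simp]: "diamond_dual [] = {#([], [])#}"
  by (simp add: diamond_dual_def)

lemma diamond_dual_rec:
  assumes "v \<noteq> []"
  shows "diamond_dual v = bind_mset (deconcat_ne v) (\<lambda>(p, r). prepend_block (weight p) {#p#} (diamond_dual r))"
proof -
  let ?f = "\<lambda>ws. image_mset (Pair (map weight ws)) (qshs ws)"
  let ?S = "\<lambda>i. (\<lambda>ws. take i v # ws) ` splits (drop i v)"
  have "diamond_dual v = (\<Sum>i\<in>{1..length v}. sum ?f (?S i))"
    unfolding diamond_dual_def splits_eq_UN[OF assms]
    by (rule sum.UNION_disjoint) (auto simp: finite_splits, metis length_take min.absorb2)
  also have "\<dots> = (\<Sum>i\<in>{1..length v}. prepend_block (weight (take i v)) {#take i v#} (diamond_dual (drop i v)))"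
  proof (rule sum.cong)
    fix i
    have "sum ?f (?S i) = (\<Sum>ws\<in>splits (drop i v). ?f (take i v # ws))"
      by (subst sum.reindex) (auto simp: inj_on_def)
    then show "sum ?f (?S i) = prepend_block (weight (take i v)) {#take i v#} (diamond_dual (drop i v))"
      by (simp add: prepend_block_single diamond_dual_def bind_mset_def[symmetric])
  qed simp
  also have "\<dots> = bind_mset (deconcat_ne v) (\<lambda>(p, r). prepend_block (weight p) {#p#} (diamond_dual r))"
    by (simp add: bind_deconcat_ne_eq_sum)
  finally show ?thesis .
qed

lemma mem_diamond_dual_weight:
  "(W, Q) \<in># diamond_dual v \<Longrightarrow> v \<noteq> [] \<Longrightarrow> W \<noteq> [] \<and> weight W = weight v"
proof (induction "length v" arbitrary: v W Q rule: less_induct)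
  case less
  then obtain p r where pr: "(p, r) \<in># deconcat_ne v"
    and "(W, Q) \<in># prepend_block (weight p) {#p#} (diamond_dual r)"
    by (auto simp: diamond_dual_rec dest!: mem_bind_mset)
  then obtain W' Q' where W': "(W', Q') \<in># diamond_dual r" and W: "W = weight p # W'"
    by (auto simp: prepend_block_single dest!: mem_bind_mset)
  have p: "p \<noteq> []" "v = p @ r"
    using mem_deconcat_ne[OF pr] by auto
  show ?case
  proof (cases "r = []")
    case True
    with W W' p show ?thesis by simp
  next
    case False
    with less.hyps[OF length_mem_deconcat_ne[OF pr] W'] W p
    show ?thesis by (simp add: weight_Cons weight_append)
  qed
qed

lemma prepend_block_empty [simp]: "prepend_block c S {#} = {#}"
  by (simp add: prepend_block_def)

lemma prepend_block_union [simp]: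
  "prepend_block c S (X + Y) = prepend_block c S X + prepend_block c S Y"
  by (simp add: prepend_block_def)

lemma prepend_block_bind_mset:
  "prepend_block c S (bind_mset Y f) = bind_mset Y (\<lambda>y. prepend_block c S (f y))"
  by (simp add: prepend_block_def)

lemma prepend_block_mset_times:
  "prepend_block c S (mset_times X Y) = mset_times (cons_mset c X) (qsh_mset S Y)"
  by (simp add: prepend_block_def bind_mset_mset_times cons_mset_def qsh_mset_def mset_times_def
      bind_mset_swap[of Y])

lemma bind_mset_prepend_block_single:
  "bind_mset S (\<lambda>s. prepend_block c {#s#} Y) = prepend_block c S Y"
  by (simp add: prepend_block_def qsh_mset_def mset_times_bind_mset_right split_def bind_mset_swap[of Y])

definition qsh_pair ::
    "('w::ab_semigroup_add list \<times> 'w list) multiset \<Rightarrow> ('w list \<times> 'w list) multiset \<Rightarrow> ('w list \<times> 'w list) multiset"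
  where "qsh_pair A B = bind_mset A (\<lambda>(a, b). bind_mset B (\<lambda>(c, d). mset_times (qsh a c) (qsh b d)))"

lemma qsh_pair_empty_left [simp]: "qsh_pair {#} B = {#}"
  by (simp add: qsh_pair_def)

lemma qsh_pair_empty_right [simp]: "qsh_pair A {#} = {#}"
  by (simp add: qsh_pair_def split_def)

lemma qsh_pair_union_left [simp]: "qsh_pair (X + Y) B = qsh_pair X B + qsh_pair Y B"
  by (simp add: qsh_pair_def)

lemma qsh_pair_union_right [simp]: "qsh_pair A (X + Y) = qsh_pair A X + qsh_pair A Y"
  by (simp add: qsh_pair_def split_def)

lemma qsh_pair_bind_mset_left: "qsh_pair (bind_mset X f) B = bind_mset X (\<lambda>x. qsh_pair (f x) B)"
  by (simp add: qsh_pair_def)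

lemma qsh_pair_bind_mset_right: "qsh_pair A (bind_mset X f) = bind_mset X (\<lambda>x. qsh_pair A (f x))"
  by (simp add: qsh_pair_def split_def bind_mset_swap[of A])

lemma bind_mset_qsh_pair:
  "bind_mset (qsh_pair X Y) g = bind_mset X (\<lambda>(A1, B1). bind_mset Y (\<lambda>(A2, B2).
     bind_mset (qsh A1 A2) (\<lambda>A. bind_mset (qsh B1 B2) (\<lambda>B. g (A, B)))))"
  by (simp add: qsh_pair_def bind_mset_mset_times split_def)

lemma image_mset_qsh_pair:
  "image_mset g (qsh_pair X Y) = bind_mset X (\<lambda>(A1, B1). bind_mset Y (\<lambda>(A2, B2).
     bind_mset (qsh A1 A2) (\<lambda>A. image_mset (\<lambda>B. g (A, B)) (qsh B1 B2))))"
  by (simp add: qsh_pair_def mset_times_def split_def image_mset.compositionality o_def)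

lemma qsh_pair_mset_times:
  "qsh_pair (mset_times X1 Y1) (mset_times X2 Y2) = mset_times (qsh_mset X1 X2) (qsh_mset Y1 Y2)"
proof -
  have "qsh_pair (mset_times X1 Y1) (mset_times X2 Y2) =
      bind_mset X1 (\<lambda>x1. bind_mset Y1 (\<lambda>y1. bind_mset X2 (\<lambda>x2. bind_mset Y2 (\<lambda>y2.
        mset_times (qsh x1 x2) (qsh y1 y2)))))"
    by (simp add: qsh_pair_def bind_mset_mset_times split_def)
  also have "\<dots> = bind_mset X1 (\<lambda>x1. bind_mset X2 (\<lambda>x2. bind_mset Y1 (\<lambda>y1. bind_mset Y2 (\<lambda>y2.
        mset_times (qsh x1 x2) (qsh y1 y2)))))"
    by (simp add: bind_mset_swap[of Y1])
  also have "\<dots> = mset_times (qsh_mset X1 X2) (qsh_mset Y1 Y2)"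
    by (simp add: qsh_mset_def mset_times_bind_mset_left) (simp add: mset_times_bind_mset_right)
  finally show ?thesis .
qed

text \<open>A Leibniz rule: prepending blocks on both factors of a componentwise quasi-shuffle
  behaves like the recursion defining the quasi-shuffle.\<close>

lemma qsh_pair_prepend_block_single:
  "qsh_pair (prepend_block c S {#(W1, Q1)#}) (prepend_block d T {#(W2, Q2)#}) =
     prepend_block c S (qsh_pair {#(W1, Q1)#} (prepend_block d T {#(W2, Q2)#}))
   + prepend_block d T (qsh_pair (prepend_block c S {#(W1, Q1)#}) {#(W2, Q2)#})
   + prepend_block (c + d) (qsh_mset S T) (qsh_pair {#(W1, Q1)#} {#(W2, Q2)#})"
proof -
  have "{#(W1, Q1)#} = mset_times {#W1#} {#Q1#}" "{#(W2, Q2)#} = mset_times {#W2#} {#Q2#}"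
    by simp_all
  then show ?thesis
    by (simp del: qsh_mset_single cons_mset_single mset_times_single qsh.simps
        add: prepend_block_mset_times qsh_pair_mset_times qsh_mset_cons_cons qsh_mset_ac add_ac)
qed

lemma qsh_pair_prepend_block:
  "qsh_pair (prepend_block c S A) (prepend_block d T B) =
     prepend_block c S (qsh_pair A (prepend_block d T B))
   + prepend_block d T (qsh_pair (prepend_block c S A) B)
   + prepend_block (c + d) (qsh_mset S T) (qsh_pair A B)"
proof (induction A)
  case (add x A)
  obtain W1 Q1 where x: "x = (W1, Q1)"
    by force
  have single: "qsh_pair (prepend_block c S {#x#}) (prepend_block d T B) =
      prepend_block c S (qsh_pair {#x#} (prepend_block d T B))
    + prepend_block d T (qsh_pair (prepend_block c S {#x#}) B)
    + prepend_block (c + d) (qsh_mset S T) (qsh_pair {#x#} B)"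
  proof (induction B)
    case (add y B)
    obtain W2 Q2 where y: "y = (W2, Q2)"
      by force
    show ?case
      unfolding add_mset_add_single[of y B]
      by (simp only: prepend_block_union qsh_pair_union_left qsh_pair_union_right add.IH[unfolded x]
          qsh_pair_prepend_block_single x y) (simp only: add_ac)
  qed simp
  show ?case
    unfolding add_mset_add_single[of x A]
    by (simp only: prepend_block_union qsh_pair_union_left qsh_pair_union_right add.IH single)
       (simp only: add_ac)
qed simp

lemma bind_qsh_prepend_block:
  assumes "x \<noteq> []" "y \<noteq> []"
  shows "bind_mset (qsh x y) (\<lambda>p. prepend_block (weight p) {#p#} Z) =
    prepend_block (weight x + weight y) (qsh x y) Z"
proof -
  have "bind_mset (qsh x y) (\<lambda>p. prepend_block (weight p) {#p#} Z) =
      bind_mset (qsh x y) (\<lambda>p. prepend_block (weight x + weight y) {#p#} Z)"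
    by (rule bind_mset_cong) (simp add: weight_mem_qsh assms)
  then show ?thesis
    by (simp add: bind_mset_prepend_block_single)
qed

lemma qsh_pair_diamond_dual:
  assumes x: "x \<noteq> []" and y: "y \<noteq> []"
  shows "qsh_pair (diamond_dual x) (diamond_dual y) =
      bind_mset (deconcat_ne x) (\<lambda>(x1, x2).
          prepend_block (weight x1) {#x1#} (qsh_pair (diamond_dual x2) (diamond_dual y))
        + bind_mset (deconcat_ne y) (\<lambda>(y1, y2).
            prepend_block (weight x1 + weight y1) (qsh x1 y1) (qsh_pair (diamond_dual x2) (diamond_dual y2))))
    + bind_mset (deconcat_ne y) (\<lambda>(y1, y2).
          prepend_block (weight y1) {#y1#} (qsh_pair (diamond_dual x) (diamond_dual y2)))"
proof -
  let ?dx = "deconcat_ne x" and ?dy = "deconcat_ne y"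
  have "qsh_pair (diamond_dual x) (diamond_dual y) =
      bind_mset ?dx (\<lambda>(x1, x2). bind_mset ?dy (\<lambda>(y1, y2).
        qsh_pair (prepend_block (weight x1) {#x1#} (diamond_dual x2))
          (prepend_block (weight y1) {#y1#} (diamond_dual y2))))"
    by (simp add: diamond_dual_rec[OF x] diamond_dual_rec[OF y] qsh_pair_bind_mset_left split_def)
       (simp add: qsh_pair_bind_mset_right split_def)
  moreover have "bind_mset ?dx (\<lambda>(x1, x2). bind_mset ?dy (\<lambda>(y1, y2).
        prepend_block (weight x1) {#x1#}
          (qsh_pair (diamond_dual x2) (prepend_block (weight y1) {#y1#} (diamond_dual y2)))))
      = bind_mset ?dx (\<lambda>(x1, x2).
          prepend_block (weight x1) {#x1#} (qsh_pair (diamond_dual x2) (diamond_dual y)))"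
    by (simp add: diamond_dual_rec[OF y] qsh_pair_bind_mset_right prepend_block_bind_mset split_def)
  moreover have "bind_mset ?dx (\<lambda>(x1, x2). bind_mset ?dy (\<lambda>(y1, y2).
        prepend_block (weight y1) {#y1#}
          (qsh_pair (prepend_block (weight x1) {#x1#} (diamond_dual x2)) (diamond_dual y2))))
      = bind_mset ?dy (\<lambda>(y1, y2).
          prepend_block (weight y1) {#y1#} (qsh_pair (diamond_dual x) (diamond_dual y2)))"
    by (simp only: split_def, subst bind_mset_swap)
       (simp add: diamond_dual_rec[OF x] qsh_pair_bind_mset_left prepend_block_bind_mset split_def)
  ultimately show ?thesis
    unfolding qsh_pair_prepend_block by (simp add: split_def add_ac)
qed

theorem diamond_dual_qsh: "bind_mset (qsh x y) diamond_dual = qsh_pair (diamond_dual x) (diamond_dual y)"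
proof (induction "length x + length y" arbitrary: x y rule: less_induct)
  case less
  show ?case
  proof (cases "x = [] \<or> y = []")
    case True
    then show ?thesis
      by (auto simp: qsh_Nil_left qsh_pair_def split_def)
  next
    case False
    then have x: "x \<noteq> []" and y: "y \<noteq> []"
      by auto
    let ?dx = "deconcat_ne x" and ?dy = "deconcat_ne y"
    let ?P = "\<lambda>p. prepend_block (weight p) {#p#}"
    have "bind_mset (qsh x y) diamond_dual =
        bind_mset (bind_mset (qsh x y) deconcat_ne) (\<lambda>(p, r). ?P p (diamond_dual r))"
      unfolding bind_mset_assoc
      by (rule bind_mset_cong) (use x in \<open>auto intro: diamond_dual_rec dest: mem_qsh_neq_Nil\<close>)
    also have "\<dots> = bind_mset ?dx (\<lambda>(x1, x2). bind_mset (deconcat y) (\<lambda>(y1, y2).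
          bind_mset (qsh x1 y1) (\<lambda>p. ?P p (bind_mset (qsh x2 y2) diamond_dual))))
        + bind_mset ?dy (\<lambda>(y1, y2). ?P y1 (bind_mset (qsh x y2) diamond_dual))"
      unfolding bind_qsh_deconcat_ne
      by (simp add: bind_mset_mset_times prepend_block_bind_mset split_def)
    also have "\<dots> = bind_mset ?dx (\<lambda>(x1, x2). bind_mset (deconcat y) (\<lambda>(y1, y2).
          bind_mset (qsh x1 y1) (\<lambda>p. ?P p (qsh_pair (diamond_dual x2) (diamond_dual y2)))))
        + bind_mset ?dy (\<lambda>(y1, y2). ?P y1 (qsh_pair (diamond_dual x) (diamond_dual y2)))"
    proof -
      have "length x2 + length y2 < length x + length y"
        if "(x1, x2) \<in># ?dx" "(y1, y2) \<in># deconcat y" for x1 x2 y1 y2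
        using length_mem_deconcat_ne[OF that(1)] mem_deconcat[OF that(2)] by auto
      moreover have "length x + length y2 < length x + length y" if "(y1, y2) \<in># ?dy" for y1 y2
        using length_mem_deconcat_ne[OF that] by auto
      ultimately show ?thesis
        by (intro arg_cong2[where f = "(+)"] bind_mset_cong) (auto simp: less intro!: bind_mset_cong)
    qed
    also have "\<dots> = qsh_pair (diamond_dual x) (diamond_dual y)"
      unfolding qsh_pair_diamond_dual[OF x y]
      by (intro arg_cong2[where f = "(+)"] bind_mset_cong)
         (auto simp: deconcat_eq[of y] bind_qsh_prepend_block dest!: mem_deconcat_ne intro!: bind_mset_cong)
    finally show ?thesis .
  qed
qed

lemma bind_qsh_bind_diamond_dual:
  "bind_mset (qsh u v) (\<lambda>x. bind_mset (diamond_dual x) g) = bind_mset (qsh_pair (diamond_dual u) (diamond_dual v)) g"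
  by (simp add: diamond_dual_qsh[symmetric])

lemma bind_qsh_image_diamond_dual:
  "bind_mset (qsh u v) (\<lambda>x. image_mset g (diamond_dual x)) = image_mset g (qsh_pair (diamond_dual u) (diamond_dual v))"
  by (simp add: diamond_dual_qsh[symmetric])

subsection \<open>Coassociativity of the dual\<close>

lemma bind_diamond_dual_qsh_rec:
  assumes "g \<noteq> []"
  shows "bind_mset (diamond_dual g) (\<lambda>(W1, Q1). bind_mset R (\<lambda>(W2, Q2). bind_mset (qsh Q1 Q2) (F W1 W2))) =
    bind_mset (deconcat_ne g) (\<lambda>(p, g'). bind_mset (diamond_dual g') (\<lambda>(W1, Q1). bind_mset R (\<lambda>(W2, Q2).
      bind_mset (qsh Q1 Q2) (\<lambda>Q. bind_mset (qsh p Q) (F (weight p # W1) W2)))))"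
  unfolding diamond_dual_rec[OF assms]
  by (simp add: prepend_block_single split_def)
     (intro bind_mset_cong, simp add: bind_mset_swap[of "qsh _ _" R] bind_mset_qsh_assoc)

text \<open>Compatibility of \<open>\<Delta>\<close> with deconcatenation of the first component: cutting the outer
  word of \<open>\<Delta> v\<close> is the same as cutting \<open>v\<close>, applying \<open>\<Delta>\<close> to both pieces and
  quasi-shuffling the inner words.\<close>

lemma diamond_dual_deconcat:
  "bind_mset (diamond_dual v) (\<lambda>(W, Q). bind_mset (deconcat W) (\<lambda>(W1, W2). F W1 W2 Q)) =
   bind_mset (deconcat v) (\<lambda>(g, r). bind_mset (diamond_dual g) (\<lambda>(W1, Q1).
     bind_mset (diamond_dual r) (\<lambda>(W2, Q2). bind_mset (qsh Q1 Q2) (F W1 W2))))"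
proof (induction "length v" arbitrary: v F rule: less_induct)
  case less
  show ?case
  proof (cases "v = []")
    case True
    then show ?thesis by simp
  next
    case v: False
    define G where "G p W1 W2 Q = bind_mset (qsh p Q) (F (weight p # W1) W2)" for p W1 W2 Q
    have first_block_empty:
      "bind_mset (deconcat_ne v) (\<lambda>(p, r). bind_mset (diamond_dual r) (\<lambda>(W, Q).
          bind_mset (qsh p Q) (F [] (weight p # W))))
        = bind_mset (diamond_dual v) (\<lambda>(W, Q). F [] W Q)"
      by (simp add: diamond_dual_rec[OF v] prepend_block_single split_def)
    have first_block_nonempty:
      "bind_mset (deconcat_ne v) (\<lambda>(p, r). bind_mset (diamond_dual r) (\<lambda>(W, Q).
         bind_mset (qsh p Q) (\<lambda>Q'. bind_mset (deconcat W) (\<lambda>(W1, W2). F (weight p # W1) W2 Q'))))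
       = bind_mset (deconcat_ne v) (\<lambda>(p, r). bind_mset (deconcat r) (\<lambda>(g, r').
           bind_mset (diamond_dual g) (\<lambda>(W1, Q1). bind_mset (diamond_dual r') (\<lambda>(W2, Q2).
             bind_mset (qsh Q1 Q2) (G p W1 W2)))))"
      by (rule bind_mset_cong_pair)
         (simp add: G_def[symmetric] bind_mset_swap[of "qsh _ _" "deconcat _"] split_def
            less.hyps[OF length_mem_deconcat_ne, simplified split_def])
    have cut_first_piece:
      "bind_mset (deconcat_ne v) (\<lambda>(g, r). bind_mset (diamond_dual g) (\<lambda>(W1, Q1).
         bind_mset (diamond_dual r) (\<lambda>(W2, Q2). bind_mset (qsh Q1 Q2) (F W1 W2))))
       = bind_mset (deconcat_ne v) (\<lambda>(g, r). bind_mset (deconcat_ne g) (\<lambda>(p, g').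
           bind_mset (diamond_dual g') (\<lambda>(W1, Q1). bind_mset (diamond_dual r) (\<lambda>(W2, Q2).
             bind_mset (qsh Q1 Q2) (G p W1 W2)))))"
      by (rule bind_mset_cong_pair) (simp add: bind_diamond_dual_qsh_rec mem_deconcat_ne G_def[abs_def])
    \<comment> \<open>An outer word \<open>weight p # W\<close> is cut either before its first letter or inside \<open>W\<close>.\<close>
    have "bind_mset (diamond_dual v) (\<lambda>(W, Q). bind_mset (deconcat W) (\<lambda>(W1, W2). F W1 W2 Q))
       = bind_mset (deconcat_ne v) (\<lambda>(p, r). bind_mset (diamond_dual r) (\<lambda>(W, Q).
           bind_mset (qsh p Q) (F [] (weight p # W))))
       + bind_mset (deconcat_ne v) (\<lambda>(p, r). bind_mset (diamond_dual r) (\<lambda>(W, Q).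
           bind_mset (qsh p Q) (\<lambda>Q'. bind_mset (deconcat W) (\<lambda>(W1, W2). F (weight p # W1) W2 Q'))))"
      by (simp add: diamond_dual_rec[OF v] prepend_block_single split_def)
    also have "\<dots> = bind_mset (diamond_dual v) (\<lambda>(W, Q). F [] W Q)
       + bind_mset (deconcat_ne v) (\<lambda>(g, r). bind_mset (diamond_dual g) (\<lambda>(W1, Q1).
           bind_mset (diamond_dual r) (\<lambda>(W2, Q2). bind_mset (qsh Q1 Q2) (F W1 W2))))"
      unfolding first_block_empty first_block_nonempty cut_first_piece deconcat_ne_coassoc ..
    also have "\<dots> = bind_mset (deconcat v) (\<lambda>(g, r). bind_mset (diamond_dual g) (\<lambda>(W1, Q1).
        bind_mset (diamond_dual r) (\<lambda>(W2, Q2). bind_mset (qsh Q1 Q2) (F W1 W2))))"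
      by (simp add: deconcat_eq[of v] qsh_Nil_left split_def del: deconcat.simps)
    finally show ?thesis .
  qed
qed

definition diamond_dual3_right :: "'w::ab_semigroup_add list \<Rightarrow> ('w list \<times> 'w list \<times> 'w list) multiset" where
  "diamond_dual3_right v =
     bind_mset (diamond_dual v) (\<lambda>(W, Q). bind_mset (diamond_dual Q) (\<lambda>(A, B). {#(W, A, B)#}))"

definition diamond_dual3_left :: "'w::ab_semigroup_add list \<Rightarrow> ('w list \<times> 'w list \<times> 'w list) multiset" where
  "diamond_dual3_left v =
     bind_mset (diamond_dual v) (\<lambda>(W, Q). bind_mset (diamond_dual W) (\<lambda>(A, B). {#(A, B, Q)#}))"

text \<open>Both triple duals satisfy \<open>G v = diamond_dual3_step G v\<close> for \<open>v \<noteq> []\<close>, a recursion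
  that determines \<open>G\<close> from its values on shorter words.\<close>

definition diamond_dual3_step ::
    "('w::ab_semigroup_add list \<Rightarrow> ('w list \<times> 'w list \<times> 'w list) multiset) \<Rightarrow> 'w list \<Rightarrow> ('w list \<times> 'w list \<times> 'w list) multiset"
  where "diamond_dual3_step G v =
    bind_mset (deconcat_ne v) (\<lambda>(p, r). bind_mset (diamond_dual p) (\<lambda>(A1, B1). bind_mset (G r) (\<lambda>(W, A2, B2).
      bind_mset (qsh A1 A2) (\<lambda>A. bind_mset (qsh B1 B2) (\<lambda>B. {#(weight p # W, A, B)#})))))"

lemma diamond_dual3_right_rec:
  assumes "v \<noteq> []"
  shows "diamond_dual3_right v = diamond_dual3_step diamond_dual3_right v"
proof -
  have "diamond_dual3_right v = bind_mset (deconcat_ne v) (\<lambda>(p, r). bind_mset (diamond_dual r) (\<lambda>(W, Q).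
      bind_mset (diamond_dual p) (\<lambda>(A1, B1). bind_mset (diamond_dual Q) (\<lambda>(A2, B2).
        bind_mset (qsh A1 A2) (\<lambda>A. bind_mset (qsh B1 B2) (\<lambda>B. {#(weight p # W, A, B)#}))))))"
    unfolding diamond_dual3_right_def diamond_dual_rec[OF assms]
    by (simp add: prepend_block_single split_def bind_qsh_bind_diamond_dual bind_mset_qsh_pair
        bind_qsh_image_diamond_dual image_mset_qsh_pair)
  also have "\<dots> = diamond_dual3_step diamond_dual3_right v"
    unfolding diamond_dual3_step_def diamond_dual3_right_def
    by (rule bind_mset_cong) (auto simp: split_def intro: bind_mset_swap)
  finally show ?thesis .
qed

lemma diamond_dual3_left_rec:
  assumes v: "v \<noteq> []"
  shows "diamond_dual3_left v = diamond_dual3_step diamond_dual3_left v"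
proof -
  define F where "F W1 W2 Q = (if W1 = [] then {#} else
      bind_mset (diamond_dual W2) (\<lambda>(A2, B2). bind_mset (qsh W1 B2) (\<lambda>B. {#(weight W1 # A2, B, Q)#})))"
    for W1 W2 Q :: "'a list"
  have dual_as_deconcat:
    "bind_mset (diamond_dual W) (\<lambda>(A, B). {#(A, B, Q)#}) = bind_mset (deconcat W) (\<lambda>(W1, W2). F W1 W2 Q)"
    if "W \<noteq> []" for W Q
    unfolding deconcat_eq[of W] diamond_dual_rec[OF that]
    by (simp add: F_def prepend_block_single split_def)
       (rule bind_mset_cong, auto simp: F_def split_def image_mset.compositionality o_def dest!: mem_deconcat_ne)
  have bind_F:
    "bind_mset (diamond_dual g) (\<lambda>(W1, Q1). bind_mset (diamond_dual r) (\<lambda>(W2, Q2).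
        bind_mset (qsh Q1 Q2) (F W1 W2)))
      = bind_mset (diamond_dual g) (\<lambda>(A1, B1). bind_mset (diamond_dual3_left r) (\<lambda>(W, A2, B2).
          bind_mset (qsh A1 A2) (\<lambda>A. bind_mset (qsh B1 B2) (\<lambda>B. {#(weight g # W, A, B)#}))))"
    if "g \<noteq> []" for g r
  proof (rule bind_mset_cong_pair)
    fix W1 Q1 assume "(W1, Q1) \<in># diamond_dual g"
    with that have "W1 \<noteq> []" "weight W1 = weight g"
      using mem_diamond_dual_weight by blast+
    then show "bind_mset (diamond_dual r) (\<lambda>(W2, Q2). bind_mset (qsh Q1 Q2) (F W1 W2)) =
        bind_mset (diamond_dual3_left r) (\<lambda>(W, A2, B2).
          bind_mset (qsh W1 A2) (\<lambda>A. bind_mset (qsh Q1 B2) (\<lambda>B. {#(weight g # W, A, B)#})))"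
      unfolding diamond_dual3_left_def
      by (simp add: F_def[abs_def] split_def bind_mset_swap[of "qsh Q1 _"])
         (intro bind_mset_cong, rule bind_mset_image_mset_swap)
  qed
  have "diamond_dual3_left v = bind_mset (diamond_dual v) (\<lambda>(W, Q). bind_mset (deconcat W) (\<lambda>(W1, W2). F W1 W2 Q))"
    unfolding diamond_dual3_left_def
    by (rule bind_mset_cong_pair) (use v in \<open>auto simp: dual_as_deconcat dest: mem_diamond_dual_weight\<close>)
  also have "\<dots> = bind_mset (deconcat v) (\<lambda>(g, r). bind_mset (diamond_dual g) (\<lambda>(W1, Q1).
      bind_mset (diamond_dual r) (\<lambda>(W2, Q2). bind_mset (qsh Q1 Q2) (F W1 W2))))"
    by (rule diamond_dual_deconcat)
  also have "\<dots> = bind_mset (deconcat_ne v) (\<lambda>(g, r). bind_mset (diamond_dual g) (\<lambda>(W1, Q1).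
      bind_mset (diamond_dual r) (\<lambda>(W2, Q2). bind_mset (qsh Q1 Q2) (F W1 W2))))"
    by (simp add: deconcat_eq[of v] F_def split_def del: deconcat.simps)
  also have "\<dots> = diamond_dual3_step diamond_dual3_left v"
    unfolding diamond_dual3_step_def
    by (rule bind_mset_cong_pair) (simp add: bind_F mem_deconcat_ne)
  finally show ?thesis .
qed

theorem diamond_dual3_right_eq_left: "diamond_dual3_right v = diamond_dual3_left v"
proof (induction "length v" arbitrary: v rule: less_induct)
  case less
  show ?case
  proof (cases "v = []")
    case True
    then show ?thesis
      by (simp add: diamond_dual3_right_def diamond_dual3_left_def)
  next
    case False
    have "diamond_dual3_step diamond_dual3_right v = diamond_dual3_step diamond_dual3_left v"
      unfolding diamond_dual3_step_def
      by (rule bind_mset_cong_pair) (simp add: less.hyps length_mem_deconcat_ne)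
    with False show ?thesis
      by (simp add: diamond_dual3_right_rec diamond_dual3_left_rec)
  qed
qed

subsection \<open>Pairing with moulds\<close>

lemma diamond_eq_sum_diamond_dual: "diamond M N w = (\<Sum>(W, Q)\<in>#diamond_dual w. M W * N Q)"
  by (cases "w = []")
     (simp_all add: diamond_def diamond_dual_def sum_mset_sum ev_def sum_mset_distrib_left
       multiset.map_comp comp_def)

lemma ev_qshs_symmetrel:
  assumes "symmetrel N"
  shows "ev N (qshs ws) = prod_list (map N ws)"
proof (induction ws)
  case (Cons w ws)
  have "ev N (qshs (w # ws)) = (\<Sum>x\<in>#qshs ws. ev N (qsh w x))"
    by (simp add: ev_def bind_mset_def[symmetric])
  also have "\<dots> = N w * ev N (qshs ws)"
    using assms by (simp add: symmetrel_def ev_def sum_mset_distrib_left)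
  finally show ?case
    using Cons by simp
qed (use assms in \<open>simp add: symmetrel_def ev_def\<close>)

theorem diamond_eq_mcomp: "symmetrel N \<Longrightarrow> diamond M N = mcomp M N"
  by (rule ext) (auto simp: diamond_def mcomp_def ev_qshs_symmetrel symmetrel_def)

lemma sum_mset_qsh_pair:
  assumes "symmetrel M" "symmetrel N"
  shows "(\<Sum>(W, Q)\<in>#qsh_pair A B. M W * N Q) =
    (\<Sum>(W, Q)\<in>#A. M W * N Q) * (\<Sum>(W, Q)\<in>#B. M W * N Q)"
  using assms
  by (simp add: qsh_pair_def split_def sum_mset_mset_times[unfolded split_def] symmetrel_def
      ev_def[symmetric] sum_mset_distrib_left sum_mset_distrib_right mult_ac)
     (subst sum_mset.swap, simp add: mult_ac)

theorem symmetrel_mcomp: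
  assumes M: "symmetrel M" and N: "symmetrel N"
  shows "symmetrel (mcomp M N)"
proof -
  have "ev (diamond M N) (qsh u v) = diamond M N u * diamond M N v" for u v
  proof -
    have "ev (diamond M N) (qsh u v) = (\<Sum>(W, Q)\<in>#bind_mset (qsh u v) diamond_dual. M W * N Q)"
      by (simp add: ev_def diamond_eq_sum_diamond_dual[abs_def])
    also have "\<dots> = diamond M N u * diamond M N v"
      by (simp only: diamond_dual_qsh sum_mset_qsh_pair[OF M N] diamond_eq_sum_diamond_dual)
    finally show ?thesis .
  qed
  moreover have "diamond M N [] = 1"
    using M N by (simp add: diamond_def symmetrel_def)
  ultimately show ?thesis
    using diamond_eq_mcomp[OF N] by (simp add: symmetrel_def)
qed

theorem diamond_assoc: "diamond (diamond M N) P = diamond M (diamond N P)"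
proof
  fix w
  have "diamond (diamond M N) P w = (\<Sum>(A, B, C)\<in>#diamond_dual3_left w. M A * N B * P C)"
    by (simp add: diamond_eq_sum_diamond_dual diamond_dual3_left_def split_def sum_mset_distrib_right
        multiset.map_comp comp_def)
  also have "\<dots> = (\<Sum>(A, B, C)\<in>#diamond_dual3_right w. M A * N B * P C)"
    by (simp add: diamond_dual3_right_eq_left)
  also have "\<dots> = diamond M (diamond N P) w"
    by (simp add: diamond_eq_sum_diamond_dual diamond_dual3_right_def split_def sum_mset_distrib_left
        mult.assoc multiset.map_comp comp_def)
  finally show "diamond (diamond M N) P w = diamond M (diamond N P) w" .
qed

theorem mainTheorem4:
  shows "(\<forall>M N P :: 'w::ab_semigroup_add list \<Rightarrow> 'a::comm_ring_1. diamond (diamond M N) P = diamond M (diamond N P))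
    \<and> (\<forall>M N :: 'w list \<Rightarrow> 'a. symmetrel N \<longrightarrow> diamond M N = mcomp M N)
    \<and> (\<forall>M N :: 'w list \<Rightarrow> 'a. symmetrel M \<and> symmetrel N \<longrightarrow> symmetrel (mcomp M N))"
  using diamond_assoc diamond_eq_mcomp symmetrel_mcomp by blast

end
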